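(* Let $r>0$, assume $W$ satisfies (H), and let $R>2r$. Let $v\in L^\infty(\mathbb{R})$ with $v(x)=1$ for a.e. $x\ge R-r$ and $v(x)=-1$ for a.e. $x\le -R+r$. Then there exists a monotone nondecreasing function $\tilde v$ with $\tilde v=v$ in $(-\infty,-R+r)\cup(R-r,+\infty)$ and $\mathcal{E}_{(-R,R)}(\tilde v)\le\mathcal{E}_{(-R,R)}(v)$.
   Context: For an interval $I$, $\operatorname{osc}_I u:=\operatorname{ess\,sup}_I u-\operatorname{ess\,inf}_I u$. $\mathcal{E}_{(a,b)}(u):=\frac1{2r^2}\int_a^b(\operatorname{osc}_{(x-r,x+r)}u)^2dx+\int_a^bW(u(x))dx$. Assumption (H): $W\in C(\mathbb{R})$, $W(\pm1)=0<W(t)$ for $t\ne\pm1$; $W$ strictly decreasing on $(-\infty,-1)$, strictly increasing on $(1,\infty)$; $W$ even on $[-1,1]$ with unique local maximum in $[-1,1]$ at $0$. *)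

theory Defs
  imports "HOL-Analysis.Analysis" "HOL-Probability.Essential_Supremum"
begin

definition ess_sup_on :: "real set \<Rightarrow> (real \<Rightarrow> real) \<Rightarrow> ereal" where
  "ess_sup_on I u = esssup (restrict_space lebesgue I) (\<lambda>x. ereal (u x))"

definition ess_inf_on :: "real set \<Rightarrow> (real \<Rightarrow> real) \<Rightarrow> ereal" where
  "ess_inf_on I u = - esssup (restrict_space lebesgue I) (\<lambda>x. - ereal (u x))"

text \<open>Oscillation osc_I u = ess sup_I u - ess inf_I u (finite for essentially bounded u).\<close>
definition osc :: "real set \<Rightarrow> (real \<Rightarrow> real) \<Rightarrow> real" where
  "osc I u = real_of_ereal (ess_sup_on I u - ess_inf_on I u)"

text \<open>The nonlocal energy E_(a,b)(u) with parameter r and potential W;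
  both integrands are nonnegative, so nonnegative integrals are used.\<close>
definition energy :: "real \<Rightarrow> (real \<Rightarrow> real) \<Rightarrow> real \<Rightarrow> real \<Rightarrow> (real \<Rightarrow> real) \<Rightarrow> ennreal" where
  "energy r W a b u =
     (\<integral>\<^sup>+ x \<in> {a<..<b}. ennreal (1 / (2 * r\<^sup>2) * (osc {x - r<..<x + r} u)\<^sup>2) \<partial>lebesgue)
   + (\<integral>\<^sup>+ x \<in> {a<..<b}. ennreal (W (u x)) \<partial>lebesgue)"

definition hyp_H :: "(real \<Rightarrow> real) \<Rightarrow> bool" where
  "hyp_H W \<longleftrightarrow> continuous_on UNIV W
     \<and> W 1 = 0 \<and> W (-1) = 0 \<and> (\<forall>t. t \<noteq> 1 \<and> t \<noteq> -1 \<longrightarrow> W t > 0)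
     \<and> strict_antimono_on {..<-1} W \<and> strict_mono_on {1<..} W
     \<and> (\<forall>t\<in>{-1..1}. W (-t) = W t)
     \<and> (\<forall>t\<in>{-1..1}. (\<exists>e>0. \<forall>s\<in>{-1..1}. \<bar>s - t\<bar> < e \<longrightarrow> W s \<le> W t) \<longleftrightarrow> t = 0)"

end

theory Submission
  imports Defs
begin

text \<open>
  Clipping \<open>v\<close> to \<open>[-1,1]\<close> lowers both the potential and every oscillation, so let \<open>u\<close> be the
  clipped function. For a point \<open>x\<^sub>0\<close> put \<open>V(y) = \<plusminus> ess sup |u|\<close> over the interval
  between \<open>x\<^sub>0\<close> and \<open>y\<close>, with the sign of \<open>y - x\<^sub>0\<close>. This \<open>V\<close> is nondecreasing, equals
  \<open>\<plusminus>1\<close> where \<open>u\<close> does near the ends, and \<open>|V| \<ge> |u|\<close> a.e.; since \<open>W\<close> decreases in \<open>|t|\<close> on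
  \<open>[-1,1]\<close>, the potential term does not increase. On a window \<open>(x-r,x+r)\<close> missing \<open>x\<^sub>0\<close> the
  oscillation of \<open>V\<close> is at most that of \<open>|u|\<close>, hence of \<open>u\<close>. A window containing \<open>x\<^sub>0\<close> is
  harmless unless \<open>u\<close> (or \<open>-u\<close>) exceeds \<open>- ess inf u\<close> (resp. \<open>ess sup u\<close>) on both of its halves.
  The cut points of the first kind and those of the second kind form two disjoint open sets,
  the first missing \<open>-R+r\<close> and the second missing \<open>R-r\<close>; by connectedness some point of
  \<open>[-R+r, R-r]\<close> is of neither kind, and it serves as \<open>x\<^sub>0\<close>.
\<close>

section \<open>A real-valued essential supremum\<close>

text \<open>
  Unlike \<open>ess_sup_on\<close>, \<open>esup\<close> needs no measurability and is real-valued; it is meaningful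
  only on sets of positive measure and for essentially bounded functions, where the two agree
  by \<open>ess_sup_on_eq_esup\<close>.
\<close>

definition lebesgue_positive :: "real set \<Rightarrow> bool" where
  "lebesgue_positive I \<longleftrightarrow> I \<in> sets lebesgue \<and> emeasure lebesgue I \<noteq> 0"

definition ess_bounded_on :: "real set \<Rightarrow> (real \<Rightarrow> real) \<Rightarrow> bool" where
  "ess_bounded_on I u \<longleftrightarrow> (\<exists>M. AE x in lebesgue. x \<in> I \<longrightarrow> \<bar>u x\<bar> \<le> M)"

definition esup :: "real set \<Rightarrow> (real \<Rightarrow> real) \<Rightarrow> real" where
  "esup I u = Inf {c. AE x in lebesgue. x \<in> I \<longrightarrow> u x \<le> c}"

definition einf :: "real set \<Rightarrow> (real \<Rightarrow> real) \<Rightarrow> real" where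
  "einf I u = - esup I (\<lambda>x. - u x)"

lemma lebesgue_positive_Ioo: "a < b \<Longrightarrow> lebesgue_positive {a<..<b}"
  by (simp add: lebesgue_positive_def)

lemma ess_bounded_onI: "(\<And>x. \<bar>u x\<bar> \<le> M) \<Longrightarrow> ess_bounded_on I u"
  unfolding ess_bounded_on_def by (intro exI[of _ M]) auto

lemma ess_bounded_on_uminus: "ess_bounded_on I u \<Longrightarrow> ess_bounded_on I (\<lambda>x. - u x)"
  unfolding ess_bounded_on_def by simp

lemma ess_bounded_on_subset: "ess_bounded_on I u \<Longrightarrow> J \<subseteq> I \<Longrightarrow> ess_bounded_on J u"
  unfolding ess_bounded_on_def by (auto elim!: eventually_mono)

lemma AE_in_positive_False:
  assumes "lebesgue_positive I" "AE x in lebesgue. x \<in> I \<longrightarrow> False"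
  shows False
  using assms AE_iff_measurable[of I lebesgue "\<lambda>x. x \<notin> I"]
  by (auto simp: lebesgue_positive_def)

lemma esup_bounds:
  assumes I: "lebesgue_positive I" and u: "ess_bounded_on I u"
  shows "{c. AE x in lebesgue. x \<in> I \<longrightarrow> u x \<le> c} \<noteq> {}"
    and "bdd_below {c. AE x in lebesgue. x \<in> I \<longrightarrow> u x \<le> c}"
proof -
  obtain M where M: "AE x in lebesgue. x \<in> I \<longrightarrow> \<bar>u x\<bar> \<le> M"
    using u by (auto simp: ess_bounded_on_def)
  then have "AE x in lebesgue. x \<in> I \<longrightarrow> u x \<le> M"
    by eventually_elim auto
  then show "{c. AE x in lebesgue. x \<in> I \<longrightarrow> u x \<le> c} \<noteq> {}"
    by blast
  show "bdd_below {c. AE x in lebesgue. x \<in> I \<longrightarrow> u x \<le> c}"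
  proof (rule bdd_belowI)
    fix c assume "c \<in> {c. AE x in lebesgue. x \<in> I \<longrightarrow> u x \<le> c}"
    then have "AE x in lebesgue. x \<in> I \<longrightarrow> u x \<le> c"
      by simp
    show "- M \<le> c"
    proof (rule ccontr)
      assume "\<not> - M \<le> c"
      with M \<open>AE x in lebesgue. x \<in> I \<longrightarrow> u x \<le> c\<close>
      have "AE x in lebesgue. x \<in> I \<longrightarrow> False"
        by eventually_elim (use \<open>\<not> - M \<le> c\<close> in auto)
      then show False
        using AE_in_positive_False[OF I] by blast
    qed
  qed
qed

lemma esup_least:
  assumes "lebesgue_positive I" "ess_bounded_on I u" "AE x in lebesgue. x \<in> I \<longrightarrow> u x \<le> c"
  shows "esup I u \<le> c"
  unfolding esup_def using esup_bounds[OF assms(1,2)] assms(3) by (intro cInf_lower) auto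

lemma AE_le_esup:
  assumes I: "lebesgue_positive I" and u: "ess_bounded_on I u"
  shows "AE x in lebesgue. x \<in> I \<longrightarrow> u x \<le> esup I u"
proof -
  have "\<forall>n::nat. AE x in lebesgue. x \<in> I \<longrightarrow> u x \<le> esup I u + 1 / Suc n"
  proof
    fix n :: nat
    have "Inf {c. AE x in lebesgue. x \<in> I \<longrightarrow> u x \<le> c} < esup I u + 1 / Suc n"
      by (simp add: esup_def)
    then obtain c where "AE x in lebesgue. x \<in> I \<longrightarrow> u x \<le> c" "c < esup I u + 1 / Suc n"
      using cInf_less_iff[OF esup_bounds[OF I u]] by blast
    then show "AE x in lebesgue. x \<in> I \<longrightarrow> u x \<le> esup I u + 1 / Suc n"
      by (auto elim: eventually_mono)
  qed
  then have "AE x in lebesgue. \<forall>n::nat. x \<in> I \<longrightarrow> u x \<le> esup I u + 1 / Suc n"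
    by (rule AE_all_countable[THEN iffD2])
  then show ?thesis
  proof eventually_elim
    case (elim x)
    show ?case
    proof
      assume "x \<in> I"
      show "u x \<le> esup I u"
      proof (rule field_le_epsilon)
        fix e :: real assume "0 < e"
        then obtain n where "inverse (real (Suc n)) < e"
          using reals_Archimedean by blast
        moreover have "u x \<le> esup I u + 1 / real (Suc n)"
          using elim \<open>x \<in> I\<close> by blast
        ultimately show "u x \<le> esup I u + e"
          by (simp add: inverse_eq_divide)
      qed
    qed
  qed
qed

lemma esup_geI:
  assumes I: "lebesgue_positive I" "ess_bounded_on I u"
    and J: "lebesgue_positive J" "J \<subseteq> I"
    and "AE x in lebesgue. x \<in> J \<longrightarrow> d \<le> u x"
  shows "d \<le> esup I u"
proof (rule ccontr)
  assume "\<not> d \<le> esup I u"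
  with AE_le_esup[OF I] assms(5) have "AE x in lebesgue. x \<in> J \<longrightarrow> False"
    by eventually_elim (use J(2) \<open>\<not> d \<le> esup I u\<close> in auto)
  then show False
    using AE_in_positive_False[OF J(1)] by blast
qed

lemma esup_mono_set:
  assumes "lebesgue_positive I" "lebesgue_positive J" "J \<subseteq> I" "ess_bounded_on I u"
  shows "esup J u \<le> esup I u"
  using assms AE_le_esup[of I u]
  by (intro esup_least) (auto intro: ess_bounded_on_subset elim!: eventually_mono)

lemma esup_Ioo_mono:
  assumes "a \<le> c" "d \<le> b" "c < d" "\<And>y. \<bar>u y\<bar> \<le> M"
  shows "esup {c<..<d} u \<le> esup {a<..<b} u"
  using assms by (intro esup_mono_set lebesgue_positive_Ioo ess_bounded_onI) auto

lemma AE_einf_le: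
  assumes "lebesgue_positive I" "ess_bounded_on I u"
  shows "AE x in lebesgue. x \<in> I \<longrightarrow> einf I u \<le> u x"
  using AE_le_esup[OF assms(1) ess_bounded_on_uminus[OF assms(2)]]
  by (auto simp: einf_def elim!: eventually_mono)

lemma einf_greatest:
  assumes "lebesgue_positive I" "ess_bounded_on I u" "AE x in lebesgue. x \<in> I \<longrightarrow> c \<le> u x"
  shows "c \<le> einf I u"
proof -
  have "esup I (\<lambda>x. - u x) \<le> - c"
    using assms by (intro esup_least ess_bounded_on_uminus[OF assms(2)]) (auto elim!: eventually_mono)
  then show ?thesis
    by (simp add: einf_def)
qed

lemma einf_le_esup:
  assumes "lebesgue_positive I" "ess_bounded_on I u"
  shows "einf I u \<le> esup I u"
  using assms AE_einf_le[OF assms] by (intro esup_geI) auto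

lemma esup_leI:
  assumes "lebesgue_positive I" "ess_bounded_on I u" "\<And>x. x \<in> I \<Longrightarrow> u x \<le> c"
  shows "esup I u \<le> c"
  using assms by (intro esup_least always_eventually) auto

lemma einf_geI:
  assumes "lebesgue_positive I" "ess_bounded_on I u" "\<And>x. x \<in> I \<Longrightarrow> c \<le> u x"
  shows "c \<le> einf I u"
  using assms by (intro einf_greatest always_eventually) auto

lemma ess_sup_on_eq_esup:
  assumes u: "u \<in> borel_measurable lebesgue" and I: "lebesgue_positive I" "ess_bounded_on I u"
  shows "ess_sup_on I u = ereal (esup I u)"
proof -
  let ?M = "restrict_space lebesgue I"
  have sI: "I \<inter> space lebesgue \<in> sets lebesgue"
    using I by (simp add: lebesgue_positive_def)
  have meas: "(\<lambda>x. ereal (u x)) \<in> borel_measurable ?M"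
    using u by (intro measurable_restrict_space1) simp
  have "esssup ?M (\<lambda>x. ereal (u x)) \<le> ereal (esup I u)"
    using AE_le_esup[OF I] by (intro esssup_I[OF meas]) (simp add: AE_restrict_space_iff[OF sI])
  moreover have "ereal (esup I u) \<le> esssup ?M (\<lambda>x. ereal (u x))"
  proof (rule ccontr)
    assume "\<not> ?thesis"
    then obtain d where d: "esssup ?M (\<lambda>x. ereal (u x)) < ereal d" "ereal d < ereal (esup I u)"
      using ereal_dense2 by (metis not_le)
    have "AE x in ?M. ereal (u x) \<le> esssup ?M (\<lambda>x. ereal (u x))"
      by (rule esssup_AE)
    then have "AE x in lebesgue. x \<in> I \<longrightarrow> u x \<le> d"
      unfolding AE_restrict_space_iff[OF sI]
      by eventually_elim (use d(1) in \<open>auto dest: order.strict_trans1\<close>)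
    then have "esup I u \<le> d"
      by (rule esup_least[OF I])
    with d(2) show False
      by simp
  qed
  ultimately show ?thesis
    by (simp add: ess_sup_on_def)
qed

lemma osc_eq_esup_minus_einf:
  assumes "u \<in> borel_measurable lebesgue" "lebesgue_positive I" "ess_bounded_on I u"
  shows "osc I u = esup I u - einf I u"
proof -
  have "ess_sup_on I (\<lambda>x. - u x) = ereal (esup I (\<lambda>x. - u x))"
    using assms by (intro ess_sup_on_eq_esup ess_bounded_on_uminus[OF assms(3)]) auto
  then have "ess_inf_on I u = ereal (einf I u)"
    by (simp add: ess_inf_on_def ess_sup_on_def einf_def)
  then show ?thesis
    by (simp add: osc_def ess_sup_on_eq_esup[OF assms])
qed

section \<open>Reflection and dependence on the endpoints\<close>

lemma null_sets_lebesgue_reflect: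
  assumes "N \<in> null_sets lebesgue"
  shows "uminus -` N \<in> null_sets (lebesgue :: real measure)"
proof -
  have meas: "uminus \<in> lebesgue \<rightarrow>\<^sub>M (lebesgue :: real measure)"
    using lebesgue_affine_measurable[where 'a=real, of "\<lambda>_. -1" 0] by (simp add: Basis_real_def)
  have "uminus -` N \<in> sets lebesgue"
    using measurable_sets[OF meas, of N] assms by auto
  moreover have "uminus -` N = (\<lambda>x. (-1) *\<^sub>R x + 0) ` N"
    by force
  ultimately show ?thesis
    using emeasure_lebesgue_affine[of "-1" 0 N] assms by (simp add: null_sets_def)
qed

lemma AE_lebesgue_reflect:
  fixes P :: "real \<Rightarrow> bool"
  assumes "AE x in lebesgue. P x"
  shows "AE x in lebesgue. P (- x)"
proof -
  have "{x. \<not> P x} \<in> null_sets lebesgue"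
    using assms by (simp add: completion.AE_iff_null_sets)
  then have "uminus -` {x. \<not> P x} \<in> null_sets lebesgue"
    by (rule null_sets_lebesgue_reflect)
  then show ?thesis
    by (simp add: completion.AE_iff_null_sets)
qed

lemma AE_lebesgue_reflect_iff:
  fixes P :: "real \<Rightarrow> bool"
  shows "(AE x in lebesgue. P (- x)) \<longleftrightarrow> (AE x in lebesgue. P x)"
proof
  assume "AE x in lebesgue. P (- x)"
  from AE_lebesgue_reflect[OF this] show "AE x in lebesgue. P x"
    by simp
qed (rule AE_lebesgue_reflect)

lemma esup_Ioo_reflect: "esup {a<..<b} (\<lambda>x. u (- x)) = esup {-b<..<-a} u"
proof -
  have "(AE x in lebesgue. x \<in> {a<..<b} \<longrightarrow> u (- x) \<le> c)
    \<longleftrightarrow> (AE x in lebesgue. x \<in> {-b<..<-a} \<longrightarrow> u x \<le> c)" for c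
    using AE_lebesgue_reflect_iff[of "\<lambda>x. x \<in> {-b<..<-a} \<longrightarrow> u x \<le> c"]
    by (simp add: minus_less_iff less_minus_iff conj_commute)
  then show ?thesis
    by (simp add: esup_def)
qed

lemma einf_Ioo_reflect: "einf {a<..<b} (\<lambda>x. u (- x)) = einf {-b<..<-a} u"
  using esup_Ioo_reflect[of a b "\<lambda>x. - u x"] by (simp add: einf_def)

lemma esup_Ioo_reflect_neg: "esup {a<..<b} (\<lambda>x. - u (- x)) = - einf {-b<..<-a} u"
  using esup_Ioo_reflect[of a b "\<lambda>x. - u x"] by (simp add: einf_def)

lemma einf_Ioo_reflect_neg: "einf {a<..<b} (\<lambda>x. - u (- x)) = - esup {-b<..<-a} u"
  using esup_Ioo_reflect[of a b u] by (simp add: einf_def)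

lemma esup_Ioo_shrink_upper:
  assumes ab: "a < b" and u: "ess_bounded_on {a<..<b} u" and d: "d < esup {a<..<b} u"
  shows "\<exists>b'. a < b' \<and> b' < b \<and> d < esup {a<..<b'} u"
proof (rule ccontr)
  assume H: "\<nexists>b'. a < b' \<and> b' < b \<and> d < esup {a<..<b'} u"
  have "AE x in lebesgue. a < t \<and> t < b \<longrightarrow> x \<in> {a<..<t} \<longrightarrow> u x \<le> d" for t
  proof (cases "a < t \<and> t < b")
    case True
    then have "esup {a<..<t} u \<le> d"
      using H by (meson not_less)
    moreover have "AE x in lebesgue. x \<in> {a<..<t} \<longrightarrow> u x \<le> esup {a<..<t} u"
      using True by (intro AE_le_esup lebesgue_positive_Ioo ess_bounded_on_subset[OF u]) auto
    ultimately show ?thesis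
      by (auto elim!: eventually_mono)
  qed auto
  then have "\<forall>t\<in>\<rat>. AE x in lebesgue. a < t \<and> t < b \<longrightarrow> x \<in> {a<..<t} \<longrightarrow> u x \<le> d"
    by blast
  then have "AE x in lebesgue. \<forall>t\<in>\<rat>. a < t \<and> t < b \<longrightarrow> x \<in> {a<..<t} \<longrightarrow> u x \<le> d"
    by (rule AE_ball_countable[THEN iffD2, OF countable_rat])
  then have "AE x in lebesgue. x \<in> {a<..<b} \<longrightarrow> u x \<le> d"
  proof eventually_elim
    case (elim x)
    show ?case
    proof
      assume x: "x \<in> {a<..<b}"
      then obtain t where "t \<in> \<rat>" "x < t" "t < b"
        using Rats_dense_in_real[of x b] by auto
      with elim x show "u x \<le> d"
        by auto
    qed
  qed
  then have "esup {a<..<b} u \<le> d"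
    by (rule esup_least[OF lebesgue_positive_Ioo[OF ab] u])
  with d show False
    by simp
qed

lemma esup_Ioo_shrink_lower:
  assumes ab: "a < b" and u: "\<And>x. \<bar>u x\<bar> \<le> M" and d: "d < esup {a<..<b} u"
  shows "\<exists>a'. a < a' \<and> a' < b \<and> d < esup {a'<..<b} u"
proof -
  have "d < esup {-b<..<-a} (\<lambda>x. u (- x))"
    using d by (simp add: esup_Ioo_reflect)
  moreover have "ess_bounded_on {-b<..<-a} (\<lambda>x. u (- x))"
    using u by (rule ess_bounded_onI)
  ultimately obtain b' where "-b < b'" "b' < -a" "d < esup {-b<..<b'} (\<lambda>x. u (- x))"
    using esup_Ioo_shrink_upper[of "-b" "-a"] ab by auto
  then show ?thesis
    by (intro exI[of _ "- b'"]) (auto simp: esup_Ioo_reflect)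
qed

lemma AE_le_esup_Ioo_right:
  assumes u: "\<And>x. \<bar>u x\<bar> \<le> M"
  shows "AE y in lebesgue. a < y \<longrightarrow> u y \<le> esup {a<..<y} u"
proof -
  define e where "e y = esup {a<..<y} u" for y
  have "mono_on {a<..} e"
    unfolding e_def by (intro mono_onI esup_Ioo_mono[OF _ _ _ u]) auto
  then have "countable {y\<in>{a<..}. \<not> isCont e y}"
    by (rule mono_on_ctble_discont_open[OF open_greaterThan])
  then have "AE y in lborel. y \<notin> {y\<in>{a<..}. \<not> isCont e y}"
    by (intro AE_not_in countable_imp_null_set_lborel)
  then have cont: "AE y in lebesgue. a < y \<longrightarrow> isCont e y"
    by (auto dest: AE_completion elim!: eventually_mono)
  have "AE y in lebesgue. a < t \<longrightarrow> y \<in> {a<..<t} \<longrightarrow> u y \<le> e t" for t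
    unfolding e_def using AE_le_esup[OF lebesgue_positive_Ioo ess_bounded_onI[of u, OF u]]
    by (cases "a < t") auto
  then have "AE y in lebesgue. \<forall>t\<in>\<rat>. a < t \<longrightarrow> y \<in> {a<..<t} \<longrightarrow> u y \<le> e t"
    by (intro AE_ball_countable[THEN iffD2, OF countable_rat]) blast
  \<comment> \<open>at a continuity point \<open>y\<close> of \<open>e\<close>, let rational \<open>t \<down> y\<close> in \<open>u y \<le> e t\<close>\<close>
  with cont show ?thesis
  proof eventually_elim
    case (elim y)
    show ?case
    proof (rule impI, rule ccontr)
      assume "a < y" "\<not> u y \<le> esup {a<..<y} u"
      then have "isCont e y" "0 < u y - e y"
        using elim by (auto simp: e_def)
      then obtain \<delta> where "0 < \<delta>" "\<And>t. dist t y < \<delta> \<Longrightarrow> dist (e t) (e y) < u y - e y"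
        unfolding continuous_at_eps_delta by blast
      moreover obtain t where "t \<in> \<rat>" "y < t" "t < y + \<delta>"
        using Rats_dense_in_real[of y "y + \<delta>"] \<open>0 < \<delta>\<close> by auto
      ultimately have "dist (e t) (e y) < u y - e y"
        by (simp add: dist_real_def)
      then have "e t < u y"
        by (simp add: dist_real_def)
      moreover have "u y \<le> e t"
        using elim \<open>a < y\<close> \<open>t \<in> \<rat>\<close> \<open>y < t\<close> by simp
      ultimately show False
        by simp
    qed
  qed
qed

lemma AE_le_esup_Ioo_left:
  assumes u: "\<And>x. \<bar>u x\<bar> \<le> M"
  shows "AE y in lebesgue. y < b \<longrightarrow> u y \<le> esup {y<..<b} u"
proof -
  have "AE y in lebesgue. - b < y \<longrightarrow> u (- y) \<le> esup {-b<..<y} (\<lambda>x. u (- x))"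
    using u by (rule AE_le_esup_Ioo_right)
  then show ?thesis
    by (subst AE_lebesgue_reflect_iff[symmetric]) (simp add: esup_Ioo_reflect minus_less_iff)
qed

lemma esup_le_max_of_cover:
  assumes "lebesgue_positive K" "lebesgue_positive V" "lebesgue_positive U"
    and U: "U \<subseteq> K \<union> V \<union> {p}" and u: "\<And>y. \<bar>u y\<bar> \<le> M"
  shows "esup U u \<le> max (esup K u) (esup V u)"
proof (rule esup_least[OF assms(3) ess_bounded_onI[of u, OF u]])
  have "AE y in lebesgue. y \<noteq> p"
    by (rule AE_completion[OF AE_lborel_singleton])
  with AE_le_esup[OF assms(1) ess_bounded_onI[of u, OF u]] AE_le_esup[OF assms(2) ess_bounded_onI[of u, OF u]]
  show "AE y in lebesgue. y \<in> U \<longrightarrow> u y \<le> max (esup K u) (esup V u)"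
    by eventually_elim (use U in auto)
qed

section \<open>Absolute values, clipping and the potential\<close>

lemma esup_minus_einf_abs_le:
  assumes I: "lebesgue_positive I" and u: "\<And>y. \<bar>u y\<bar> \<le> M"
  shows "esup I (\<lambda>y. \<bar>u y\<bar>) - einf I (\<lambda>y. \<bar>u y\<bar>) \<le> esup I u - einf I u"
proof -
  have b: "ess_bounded_on I u" "ess_bounded_on I (\<lambda>y. \<bar>u y\<bar>)"
    using u by (auto intro!: ess_bounded_onI[of _ M])
  let ?S = "esup I u" and ?I = "einf I u"
  have AE: "AE y in lebesgue. y \<in> I \<longrightarrow> ?I \<le> u y \<and> u y \<le> ?S"
    using AE_le_esup[OF I b(1)] AE_einf_le[OF I b(1)] by eventually_elim auto
  have "esup I (\<lambda>y. \<bar>u y\<bar>) \<le> max ?S (- ?I)"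
    using AE by (intro esup_least[OF I b(2)]) (auto elim!: eventually_mono)
  moreover have "max 0 (max ?I (- ?S)) \<le> einf I (\<lambda>y. \<bar>u y\<bar>)"
    using AE by (intro einf_greatest[OF I b(2)]) (auto elim!: eventually_mono)
  moreover have "?I \<le> ?S"
    by (rule einf_le_esup[OF I b(1)])
  ultimately show ?thesis
    by (auto simp: max_def split: if_splits)
qed

definition unit_clip :: "real \<Rightarrow> real" where
  "unit_clip t = max (-1) (min 1 t)"

lemma abs_unit_clip_le: "\<bar>unit_clip t\<bar> \<le> 1"
  by (simp add: unit_clip_def)

lemma esup_minus_einf_unit_clip_le:
  assumes I: "lebesgue_positive I" and u: "ess_bounded_on I u"
  shows "esup I (\<lambda>y. unit_clip (u y)) - einf I (\<lambda>y. unit_clip (u y)) \<le> esup I u - einf I u"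
proof -
  have c: "ess_bounded_on I (\<lambda>y. unit_clip (u y))"
    by (intro ess_bounded_onI[of _ 1] abs_unit_clip_le)
  let ?S = "esup I u" and ?I = "einf I u"
  have AE: "AE y in lebesgue. y \<in> I \<longrightarrow> ?I \<le> u y \<and> u y \<le> ?S"
    using AE_le_esup[OF I u] AE_einf_le[OF I u] by eventually_elim auto
  have "esup I (\<lambda>y. unit_clip (u y)) \<le> unit_clip ?S"
    using AE by (intro esup_least[OF I c]) (auto elim!: eventually_mono simp: unit_clip_def)
  moreover have "unit_clip ?I \<le> einf I (\<lambda>y. unit_clip (u y))"
    using AE by (intro einf_greatest[OF I c]) (auto elim!: eventually_mono simp: unit_clip_def)
  moreover have "?I \<le> ?S"
    by (rule einf_le_esup[OF I u])
  ultimately show ?thesis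
    by (auto simp: unit_clip_def max_def min_def split: if_splits)
qed

lemma W_nonneg: "hyp_H W \<Longrightarrow> 0 \<le> W t"
  unfolding hyp_H_def by (cases "t = 1 \<or> t = -1") (auto intro: less_imp_le)

lemma W_antimono_on_0_1:
  assumes H: "hyp_H W" and st: "0 \<le> s" "s \<le> t" "t \<le> 1"
  shows "W t \<le> W s"
proof (rule ccontr)
  assume "\<not> W t \<le> W s"
  have "continuous_on {s..1} W"
    using H unfolding hyp_H_def by (auto intro: continuous_on_subset)
  then obtain p where p: "p \<in> {s..1}" "\<forall>y\<in>{s..1}. W y \<le> W p"
    using continuous_attains_sup[OF compact_Icc _ \<open>continuous_on {s..1} W\<close>] st by auto
  have "W s < W p"
    using \<open>\<not> W t \<le> W s\<close> p(2)[rule_format, of t] st by auto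
  moreover have "W 1 = 0"
    using H unfolding hyp_H_def by auto
  ultimately have "p \<noteq> s" "p \<noteq> 1"
    using W_nonneg[OF H, of s] by auto
  \<comment> \<open>an interior maximum on \<open>[s,1]\<close> is a local maximum on \<open>[-1,1]\<close>, hence it is \<open>0\<close>\<close>
  have "\<exists>e>0. \<forall>q\<in>{-1..1}. \<bar>q - p\<bar> < e \<longrightarrow> W q \<le> W p"
  proof (intro exI[of _ "min (p - s) (1 - p)"] conjI ballI impI)
    show "0 < min (p - s) (1 - p)"
      using p(1) \<open>p \<noteq> s\<close> \<open>p \<noteq> 1\<close> by auto
  next
    fix q assume "q \<in> {-1..1}" "\<bar>q - p\<bar> < min (p - s) (1 - p)"
    then show "W q \<le> W p"
      using p by auto
  qed
  moreover have "p \<in> {-1..1}"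
    using p(1) st by auto
  ultimately have "p = 0"
    using H unfolding hyp_H_def by blast
  with p(1) \<open>p \<noteq> s\<close> st show False
    by auto
qed

lemma W_le_of_abs_le:
  assumes H: "hyp_H W" and st: "\<bar>s\<bar> \<le> \<bar>t\<bar>" "\<bar>t\<bar> \<le> 1"
  shows "W t \<le> W s"
proof -
  have even: "W \<bar>y\<bar> = W y" if "\<bar>y\<bar> \<le> 1" for y
    using H that by (cases "y < 0") (auto simp: hyp_H_def)
  show ?thesis
    using W_antimono_on_0_1[OF H, of "\<bar>s\<bar>" "\<bar>t\<bar>"] even[of s] even[of t] st by auto
qed

lemma W_unit_clip_le:
  assumes H: "hyp_H W"
  shows "W (unit_clip t) \<le> W t"
proof (cases "t \<in> {-1..1}")
  case True
  then have "unit_clip t = t"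
    by (auto simp: unit_clip_def max_def min_def)
  then show ?thesis
    by simp
next
  case False
  then have "W (unit_clip t) = 0"
    using H by (auto simp: hyp_H_def unit_clip_def max_def min_def)
  then show ?thesis
    using W_nonneg[OF H] by simp
qed

section \<open>The outward running supremum\<close>

definition outward_sup :: "(real \<Rightarrow> real) \<Rightarrow> real \<Rightarrow> real \<Rightarrow> real" where
  "outward_sup w x0 y =
     (if y < x0 then - esup {y<..<x0} w else if y = x0 then 0 else esup {x0<..<y} w)"

lemma esup_Ioo_nonneg_bounded:
  assumes w: "\<And>y. 0 \<le> w y" "\<And>y. w y \<le> M" and ab: "a < b"
  shows "0 \<le> esup {a<..<b} w" "esup {a<..<b} w \<le> M"
proof -
  have b: "ess_bounded_on {a<..<b} w"
    using w by (intro ess_bounded_onI[of w M]) (simp add: abs_of_nonneg)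
  show "0 \<le> esup {a<..<b} w"
    using w(1) by (intro esup_geI[OF lebesgue_positive_Ioo[OF ab] b lebesgue_positive_Ioo[OF ab]]) auto
  show "esup {a<..<b} w \<le> M"
    using w(2) by (intro esup_leI[OF lebesgue_positive_Ioo[OF ab] b])
qed

lemma abs_outward_sup_le:
  assumes "\<And>y. 0 \<le> w y" "\<And>y. w y \<le> M"
  shows "\<bar>outward_sup w x0 y\<bar> \<le> M"
  using esup_Ioo_nonneg_bounded[of w M, OF assms] assms[of 0] by (auto simp: outward_sup_def)

lemma outward_sup_nonneg:
  assumes "\<And>y. 0 \<le> w y" "\<And>y. w y \<le> M" "x0 \<le> y"
  shows "0 \<le> outward_sup w x0 y"
  using assms esup_Ioo_nonneg_bounded(1)[of w M x0 y, OF assms(1,2)] by (simp add: outward_sup_def)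

lemma outward_sup_nonpos:
  assumes "\<And>y. 0 \<le> w y" "\<And>y. w y \<le> M" "y \<le> x0"
  shows "outward_sup w x0 y \<le> 0"
  using assms esup_Ioo_nonneg_bounded(1)[of w M y x0, OF assms(1,2)] by (simp add: outward_sup_def)

lemma mono_outward_sup:
  assumes w: "\<And>y. 0 \<le> w y" "\<And>y. w y \<le> M"
  shows "mono (outward_sup w x0)"
proof (rule monoI)
  have wM: "\<bar>w y\<bar> \<le> M" for y
    using w[of y] by simp
  fix y1 y2 :: real assume "y1 \<le> y2"
  consider "y2 < x0" | "y1 \<le> x0" "x0 \<le> y2" | "x0 < y1"
    by linarith
  then show "outward_sup w x0 y1 \<le> outward_sup w x0 y2"
  proof cases
    case 1
    with \<open>y1 \<le> y2\<close> have "esup {y2<..<x0} w \<le> esup {y1<..<x0} w"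
      by (intro esup_Ioo_mono[OF _ _ _ wM]) auto
    with 1 \<open>y1 \<le> y2\<close> show ?thesis
      by (simp add: outward_sup_def)
  next
    case 2
    then show ?thesis
      using outward_sup_nonpos[of w M y1 x0, OF w] outward_sup_nonneg[of w M x0 y2, OF w] by linarith
  next
    case 3
    with \<open>y1 \<le> y2\<close> have "esup {x0<..<y1} w \<le> esup {x0<..<y2} w"
      by (intro esup_Ioo_mono[OF _ _ _ wM]) auto
    with 3 \<open>y1 \<le> y2\<close> show ?thesis
      by (simp add: outward_sup_def)
  qed
qed

lemma outward_sup_reflect:
  "outward_sup (\<lambda>y. w (- y)) (- x0) y = - outward_sup w x0 (- y)"
  by (simp add: outward_sup_def esup_Ioo_reflect)

lemma outward_sup_le_esup_Ioo:
  assumes w: "\<And>y. 0 \<le> w y" "\<And>y. w y \<le> M" and "y \<le> b" "x0 < b"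
  shows "outward_sup w x0 y \<le> esup {x0<..<b} w"
proof (cases "x0 < y")
  case True
  have "esup {x0<..<y} w \<le> esup {x0<..<b} w"
    using True assms w by (intro esup_Ioo_mono[of _ _ _ _ w M]) auto
  with True show ?thesis
    by (simp add: outward_sup_def)
next
  case False
  then show ?thesis
    using outward_sup_nonpos[of w M y x0, OF w] esup_Ioo_nonneg_bounded(1)[of w M x0 b, OF w] assms
    by simp
qed

lemma outward_sup_ge_neg_esup_Ioo:
  assumes w: "\<And>y. 0 \<le> w y" "\<And>y. w y \<le> M" and "a \<le> y" "a < x0"
  shows "- esup {a<..<x0} w \<le> outward_sup w x0 y"
proof (cases "y < x0")
  case True
  have "esup {y<..<x0} w \<le> esup {a<..<x0} w"
    using True assms w by (intro esup_Ioo_mono[of _ _ _ _ w M]) auto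
  with True show ?thesis
    by (simp add: outward_sup_def)
next
  case False
  then show ?thesis
    using outward_sup_nonneg[of w M x0 y, OF w] esup_Ioo_nonneg_bounded(1)[of w M a x0, OF w] assms
    by simp
qed

lemma AE_le_abs_outward_sup:
  assumes w: "\<And>y. 0 \<le> w y" "\<And>y. w y \<le> M"
  shows "AE y in lebesgue. w y \<le> \<bar>outward_sup w x0 y\<bar>"
proof -
  have wM: "\<bar>w y\<bar> \<le> M" for y
    using w[of y] by simp
  have "AE y in lebesgue. y \<noteq> x0"
    by (rule AE_completion[OF AE_lborel_singleton])
  with AE_le_esup_Ioo_left[of w M, OF wM, of x0] AE_le_esup_Ioo_right[of w M, OF wM, of x0]
  show ?thesis
  proof eventually_elim
    case (elim y)
    then consider "y < x0" | "x0 < y"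
      by linarith
    then show ?case
      using elim esup_Ioo_nonneg_bounded[of w M, OF w] by cases (auto simp: outward_sup_def)
  qed
qed

lemma outward_sup_eq_lower:
  assumes w: "\<And>y. 0 \<le> w y" "\<And>y. w y \<le> M" and "AE y in lebesgue. y < a \<longrightarrow> M \<le> w y"
    and "y < a" "a \<le> x0"
  shows "outward_sup w x0 y = - M"
proof -
  have "M \<le> esup {y<..<x0} w"
    using assms w by (intro esup_geI[OF lebesgue_positive_Ioo _ lebesgue_positive_Ioo[of y a]]
        ess_bounded_onI[of w M]) (auto simp: abs_of_nonneg elim!: eventually_mono)
  then show ?thesis
    using esup_Ioo_nonneg_bounded[of w M, OF w, of y x0] assms by (simp add: outward_sup_def)
qed

lemma outward_sup_eq_upper:
  assumes w: "\<And>y. 0 \<le> w y" "\<And>y. w y \<le> M" and "AE y in lebesgue. b < y \<longrightarrow> M \<le> w y"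
    and "b < y" "x0 \<le> b"
  shows "outward_sup w x0 y = M"
proof -
  have "M \<le> esup {x0<..<y} w"
    using assms w by (intro esup_geI[OF lebesgue_positive_Ioo _ lebesgue_positive_Ioo[of b y]]
        ess_bounded_onI[of w M]) (auto simp: abs_of_nonneg elim!: eventually_mono)
  then show ?thesis
    using esup_Ioo_nonneg_bounded[of w M, OF w, of x0 y] assms by (simp add: outward_sup_def)
qed

lemma esup_minus_einf_outward_sup_inside:
  assumes w: "\<And>y. 0 \<le> w y" "\<And>y. w y \<le> M" and x0: "x - r < x0" "x0 < x + r"
  shows "esup {x-r<..<x+r} (outward_sup w x0) - einf {x-r<..<x+r} (outward_sup w x0)
    \<le> esup {x0<..<x+r} w + esup {x-r<..<x0} w"
proof -
  let ?W = "{x-r<..<x+r}" and ?v = "outward_sup w x0"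
  have W: "lebesgue_positive ?W" "ess_bounded_on ?W ?v"
    using x0 abs_outward_sup_le[of w M, OF w] by (auto intro!: lebesgue_positive_Ioo ess_bounded_onI)
  have "esup ?W ?v \<le> esup {x0<..<x+r} w"
    using x0 by (intro esup_leI[OF W] outward_sup_le_esup_Ioo[of w M, OF w]) auto
  moreover have "- esup {x-r<..<x0} w \<le> einf ?W ?v"
    using x0 by (intro einf_geI[OF W] outward_sup_ge_neg_esup_Ioo[of w M, OF w]) auto
  ultimately show ?thesis
    by linarith
qed

lemma esup_minus_einf_outward_sup_right:
  assumes w: "\<And>y. 0 \<le> w y" "\<And>y. w y \<le> M" and r: "0 < r" and x0: "x0 \<le> x - r"
  shows "esup {x-r<..<x+r} (outward_sup w x0) - einf {x-r<..<x+r} (outward_sup w x0)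
    \<le> esup {x-r<..<x+r} w - einf {x-r<..<x+r} w"
proof -
  let ?W = "{x-r<..<x+r}" and ?v = "outward_sup w x0"
  have wM: "\<bar>w y\<bar> \<le> M" for y
    using w[of y] by simp
  have W: "lebesgue_positive ?W" "ess_bounded_on ?W ?v" "ess_bounded_on ?W w"
    using r abs_outward_sup_le[of w M, OF w] wM by (auto intro!: lebesgue_positive_Ioo ess_bounded_onI)
  have v: "?v y = esup {x0<..<y} w" if "y \<in> ?W" for y
    using that x0 by (simp add: outward_sup_def)
  have inf_le: "einf ?W w \<le> einf ?W ?v"
  proof (rule einf_geI[OF W(1,2)])
    fix y assume y: "y \<in> ?W"
    have "AE z in lebesgue. z \<in> {x-r<..<y} \<longrightarrow> einf ?W w \<le> w z"
      using AE_einf_le[OF W(1,3)] y by (auto elim!: eventually_mono)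
    with y x0 show "einf ?W w \<le> ?v y"
      unfolding v[OF y] by (intro esup_geI[OF lebesgue_positive_Ioo ess_bounded_onI[of w M, OF wM]
          lebesgue_positive_Ioo[of "x - r" y]]) auto
  qed
  have sup_le: "esup ?W ?v \<le> esup {x0<..<x+r} w"
    using x0 by (intro esup_leI[OF W(1,2)]) (auto simp: v intro!: esup_Ioo_mono[OF _ _ _ wM])
  have "einf ?W w \<le> esup ?W w"
    by (rule einf_le_esup[OF W(1,3)])
  consider "x0 = x - r" | "x0 < x - r"
    using x0 by linarith
  then have "esup {x0<..<x+r} w - einf ?W ?v \<le> esup ?W w - einf ?W w"
  proof cases
    case 1
    with inf_le show ?thesis
      by simp
  next
    case 2
    let ?A = "esup {x0<..<x-r} w"
    have "esup {x0<..<x+r} w \<le> max ?A (esup ?W w)"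
      using 2 r by (intro esup_le_max_of_cover[OF _ _ _ _ wM, of _ _ _ "x - r"] lebesgue_positive_Ioo) auto
    moreover have "?A \<le> einf ?W ?v"
      using 2 by (intro einf_geI[OF W(1,2)]) (auto simp: v intro!: esup_Ioo_mono[OF _ _ _ wM])
    ultimately show ?thesis
      using inf_le \<open>einf ?W w \<le> esup ?W w\<close> unfolding le_max_iff_disj by (elim disjE) linarith+
  qed
  with sup_le show ?thesis
    by linarith
qed

lemma esup_minus_einf_outward_sup_left:
  assumes w: "\<And>y. 0 \<le> w y" "\<And>y. w y \<le> M" and r: "0 < r" and x0: "x + r \<le> x0"
  shows "esup {x-r<..<x+r} (outward_sup w x0) - einf {x-r<..<x+r} (outward_sup w x0)
    \<le> esup {x-r<..<x+r} w - einf {x-r<..<x+r} w"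
proof -
  let ?w = "\<lambda>y. w (- y)" and ?W' = "{- x - r<..<- x + r}"
  have "esup ?W' (outward_sup ?w (- x0)) - einf ?W' (outward_sup ?w (- x0))
    \<le> esup ?W' ?w - einf ?W' ?w"
    using w r x0 by (intro esup_minus_einf_outward_sup_right[of _ M]) auto
  moreover have "outward_sup ?w (- x0) = (\<lambda>y. - outward_sup w x0 (- y))"
    by (rule ext) (rule outward_sup_reflect)
  ultimately show ?thesis
    using esup_Ioo_reflect_neg[of "- x - r" "- x + r" "outward_sup w x0"]
      einf_Ioo_reflect_neg[of "- x - r" "- x + r" "outward_sup w x0"]
      esup_Ioo_reflect[of "- x - r" "- x + r" w] einf_Ioo_reflect[of "- x - r" "- x + r" w]
    by (simp add: add.commute)
qed

section \<open>Balanced cut points\<close>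

text \<open>
  \<open>high_cut u u' r x\<^sub>0 x\<close>: the point \<open>x\<^sub>0\<close> cuts the window of radius \<open>r\<close> around \<open>x\<close> into two
  halves on each of which \<open>u\<close> rises above the essential supremum of \<open>u'\<close> on the whole window.
  With \<open>u' = -u\<close>, and with the roles of \<open>u\<close> and \<open>-u\<close> exchanged, these are the only
  obstructions to bounding the sum of the suprema of \<open>|u|\<close> on the two halves by the oscillation
  of \<open>u\<close> on the window.
\<close>

definition high_cut :: "(real \<Rightarrow> real) \<Rightarrow> (real \<Rightarrow> real) \<Rightarrow> real \<Rightarrow> real \<Rightarrow> real \<Rightarrow> bool" where
  "high_cut u u' r x0 x \<longleftrightarrow> x - r < x0 \<and> x0 < x + r
     \<and> esup {x-r<..<x+r} u' < esup {x-r<..<x0} u \<and> esup {x-r<..<x+r} u' < esup {x0<..<x+r} u"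

definition cut_set :: "(real \<Rightarrow> real) \<Rightarrow> (real \<Rightarrow> real) \<Rightarrow> real \<Rightarrow> real set" where
  "cut_set u u' r = {x0. \<exists>x. high_cut u u' r x0 x}"

lemma open_cut_set:
  assumes u: "\<And>y. \<bar>u y\<bar> \<le> M"
  shows "open (cut_set u u' r)"
proof (subst open_subopen, intro ballI)
  fix x0 assume "x0 \<in> cut_set u u' r"
  then obtain x where cut: "high_cut u u' r x0 x"
    by (auto simp: cut_set_def)
  let ?d = "esup {x-r<..<x+r} u'"
  have x0: "x - r < x0" "x0 < x + r"
    using cut by (auto simp: high_cut_def)
  obtain b' where b': "x - r < b'" "b' < x0" "?d < esup {x-r<..<b'} u"
    using esup_Ioo_shrink_upper[OF x0(1) ess_bounded_onI[of u M, OF u]] cut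
    by (auto simp: high_cut_def)
  obtain a' where a': "x0 < a'" "a' < x + r" "?d < esup {a'<..<x+r} u"
    using esup_Ioo_shrink_lower[of x0 "x + r" u M, OF x0(2) u] cut by (auto simp: high_cut_def)
  have "high_cut u u' r z x" if z: "z \<in> {b'<..<a'}" for z
  proof -
    have "esup {x-r<..<b'} u \<le> esup {x-r<..<z} u" "esup {a'<..<x+r} u \<le> esup {z<..<x+r} u"
      using z a' b' by (auto intro!: esup_Ioo_mono[OF _ _ _ u])
    then show ?thesis
      using z a' b' by (auto simp: high_cut_def)
  qed
  then have "{b'<..<a'} \<subseteq> cut_set u u' r"
    unfolding cut_set_def by blast
  with a' b' show "\<exists>T. open T \<and> x0 \<in> T \<and> T \<subseteq> cut_set u u' r"
    by (intro exI[of _ "{b'<..<a'}"]) auto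
qed

lemma high_cut_ordered_False:
  assumes u: "\<And>y. \<bar>u y\<bar> \<le> M" and u': "\<And>y. \<bar>u' y\<bar> \<le> M"
    and cut: "high_cut u u' r x0 x2" "high_cut u' u r x0 x1" and "x1 \<le> x2"
  shows False
proof -
  have x: "x2 - r < x0" "x0 < x1 + r" "x1 - r \<le> x2 - r" "x1 + r \<le> x2 + r"
    using cut \<open>x1 \<le> x2\<close> by (auto simp: high_cut_def)
  have "esup {x1-r<..<x1+r} u < esup {x0<..<x1+r} u'"
    using cut by (simp add: high_cut_def)
  also have "\<dots> \<le> esup {x2-r<..<x2+r} u'"
    using x by (intro esup_Ioo_mono[OF _ _ _ u']) auto
  also have "\<dots> < esup {x2-r<..<x0} u"
    using cut by (simp add: high_cut_def)
  also have "\<dots> \<le> esup {x1-r<..<x1+r} u"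
    using x by (intro esup_Ioo_mono[OF _ _ _ u]) auto
  finally show False
    by simp
qed

lemma not_in_both_cut_sets:
  assumes "\<And>y. \<bar>u y\<bar> \<le> M" "\<And>y. \<bar>u' y\<bar> \<le> M" "x0 \<in> cut_set u u' r"
  shows "x0 \<notin> cut_set u' u r"
proof
  assume "x0 \<in> cut_set u' u r"
  with assms(3) obtain x1 x2 where "high_cut u u' r x0 x2" "high_cut u' u r x0 x1"
    by (auto simp: cut_set_def)
  then show False
    using high_cut_ordered_False[of u M u' r x0 x2 x1] high_cut_ordered_False[of u' M u r x0 x1 x2]
      assms(1,2) by (cases "x1 \<le> x2") auto
qed

lemma exists_not_in_cut_sets:
  assumes u: "\<And>y. \<bar>u y\<bar> \<le> M" and u': "\<And>y. \<bar>u' y\<bar> \<le> M" and "a \<le> b"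
    and a: "a \<notin> cut_set u u' r" and b: "b \<notin> cut_set u' u r"
  shows "\<exists>x0\<in>{a..b}. x0 \<notin> cut_set u u' r \<union> cut_set u' u r"
proof (rule ccontr)
  assume "\<not> ?thesis"
  then have cover: "{a..b} \<subseteq> cut_set u' u r \<union> cut_set u u' r"
    by blast
  have "cut_set u' u r \<inter> cut_set u u' r \<inter> {a..b} = {}"
    using not_in_both_cut_sets[of u M u', OF u u'] by blast
  then have "cut_set u' u r \<inter> {a..b} = {} \<or> cut_set u u' r \<inter> {a..b} = {}"
    using connectedD[OF connected_Icc open_cut_set[OF u'] open_cut_set[OF u] _ cover] by blast
  moreover have "a \<in> {a..b}" "b \<in> {a..b}"
    using \<open>a \<le> b\<close> by auto
  ultimately show False
    using cover a b by blast
qed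

lemma not_in_cut_set_lower:
  assumes u: "\<And>y. \<bar>u y\<bar> \<le> M" and u': "\<And>y. \<bar>u' y\<bar> \<le> M"
    and a: "AE y in lebesgue. y < a \<longrightarrow> u y \<le> - M"
  shows "a \<notin> cut_set u u' r"
proof
  assume "a \<in> cut_set u u' r"
  then obtain x where cut: "high_cut u u' r a x"
    by (auto simp: cut_set_def)
  then have x: "x - r < a" "a < x + r"
    by (auto simp: high_cut_def)
  have u'_ge: "- M \<le> u' y" for y
    using u'[of y] by linarith
  have "esup {x-r<..<a} u \<le> - M"
    using a by (intro esup_least[OF lebesgue_positive_Ioo[OF x(1)] ess_bounded_onI[of u M, OF u]])
      (auto elim!: eventually_mono)
  moreover have "- M \<le> esup {x-r<..<x+r} u'"
    using x u'_ge by (intro esup_geI[OF lebesgue_positive_Ioo ess_bounded_onI[of u' M, OF u']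
        lebesgue_positive_Ioo[of "x - r" "x + r"]]) (auto intro!: always_eventually)
  ultimately show False
    using cut by (auto simp: high_cut_def)
qed

lemma not_in_cut_set_upper:
  assumes u: "\<And>y. \<bar>u y\<bar> \<le> M" and u': "\<And>y. \<bar>u' y\<bar> \<le> M"
    and b: "AE y in lebesgue. b < y \<longrightarrow> u y \<le> - M"
  shows "b \<notin> cut_set u u' r"
proof
  assume "b \<in> cut_set u u' r"
  then obtain x where cut: "high_cut u u' r b x"
    by (auto simp: cut_set_def)
  then have x: "x - r < b" "b < x + r"
    by (auto simp: high_cut_def)
  have u'_ge: "- M \<le> u' y" for y
    using u'[of y] by linarith
  have "esup {b<..<x+r} u \<le> - M"
    using b by (intro esup_least[OF lebesgue_positive_Ioo[OF x(2)] ess_bounded_onI[of u M, OF u]])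
      (auto elim!: eventually_mono)
  moreover have "- M \<le> esup {x-r<..<x+r} u'"
    using x u'_ge by (intro esup_geI[OF lebesgue_positive_Ioo ess_bounded_onI[of u' M, OF u']
        lebesgue_positive_Ioo[of "x - r" "x + r"]]) (auto intro!: always_eventually)
  ultimately show False
    using cut by (auto simp: high_cut_def)
qed

definition balanced_point :: "(real \<Rightarrow> real) \<Rightarrow> real \<Rightarrow> real \<Rightarrow> bool" where
  "balanced_point u r x0 \<longleftrightarrow> x0 \<notin> cut_set u (\<lambda>y. - u y) r \<union> cut_set (\<lambda>y. - u y) u r"

lemma exists_balanced_point:
  assumes u: "\<And>y. \<bar>u y\<bar> \<le> M" and "a \<le> b"
    and a: "AE y in lebesgue. y < a \<longrightarrow> u y \<le> - M" and b: "AE y in lebesgue. b < y \<longrightarrow> M \<le> u y"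
  shows "\<exists>x0\<in>{a..b}. balanced_point u r x0"
proof -
  have n: "\<bar>- u y\<bar> \<le> M" for y
    using u[of y] by simp
  have "a \<notin> cut_set u (\<lambda>y. - u y) r"
    using a by (rule not_in_cut_set_lower[of u M "\<lambda>y. - u y", OF u n])
  moreover have "b \<notin> cut_set (\<lambda>y. - u y) u r"
    using b by (intro not_in_cut_set_upper[of "\<lambda>y. - u y" M u, OF n u]) (auto elim!: eventually_mono)
  ultimately show ?thesis
    using exists_not_in_cut_sets[of u M "\<lambda>y. - u y", OF u n \<open>a \<le> b\<close>] by (simp add: balanced_point_def)
qed

lemma esup_abs_le_max:
  assumes I: "lebesgue_positive I" and u: "\<And>y. \<bar>u y\<bar> \<le> M"
  shows "esup I (\<lambda>y. \<bar>u y\<bar>) \<le> max (esup I u) (esup I (\<lambda>y. - u y))"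
proof -
  have b: "ess_bounded_on I u" "ess_bounded_on I (\<lambda>y. - u y)" "ess_bounded_on I (\<lambda>y. \<bar>u y\<bar>)"
    using u by (auto intro!: ess_bounded_onI[of _ M])
  show ?thesis
    using AE_le_esup[OF I b(1)] AE_le_esup[OF I b(2)]
    by (intro esup_least[OF I b(3)]) (auto elim!: eventually_elim2)
qed

lemma esup_abs_add_le_of_balanced_point:
  assumes u: "\<And>y. \<bar>u y\<bar> \<le> M"
    and x0: "balanced_point u r x0" "x - r < x0" "x0 < x + r"
  shows "esup {x0<..<x+r} (\<lambda>y. \<bar>u y\<bar>) + esup {x-r<..<x0} (\<lambda>y. \<bar>u y\<bar>)
    \<le> esup {x-r<..<x+r} u - einf {x-r<..<x+r} u"
proof -
  let ?W = "{x-r<..<x+r}" and ?L = "{x-r<..<x0}" and ?R = "{x0<..<x+r}" and ?n = "\<lambda>y. - u y"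
  have n: "\<bar>?n y\<bar> \<le> M" for y
    using u[of y] by simp
  have "\<not> high_cut u ?n r x0 x" "\<not> high_cut ?n u r x0 x"
    using x0(1) by (auto simp: balanced_point_def cut_set_def)
  moreover have "esup ?R (\<lambda>y. \<bar>u y\<bar>) \<le> max (esup ?R u) (esup ?R ?n)"
    "esup ?L (\<lambda>y. \<bar>u y\<bar>) \<le> max (esup ?L u) (esup ?L ?n)"
    using x0 by (auto intro!: esup_abs_le_max[OF _ u] lebesgue_positive_Ioo)
  moreover have "esup ?R u \<le> esup ?W u" "esup ?L u \<le> esup ?W u"
    "esup ?R ?n \<le> esup ?W ?n" "esup ?L ?n \<le> esup ?W ?n"
    using x0 by (auto intro!: esup_Ioo_mono[OF _ _ _ u] esup_Ioo_mono[OF _ _ _ n])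
  ultimately show ?thesis
    using x0 unfolding high_cut_def einf_def by (auto simp: max_def split: if_split_asm)
qed

lemma esup_minus_einf_outward_sup_le:
  assumes u: "\<And>y. \<bar>u y\<bar> \<le> M" and r: "0 < r"
    and x0: "balanced_point u r x0"
  shows "esup {x-r<..<x+r} (outward_sup (\<lambda>y. \<bar>u y\<bar>) x0)
      - einf {x-r<..<x+r} (outward_sup (\<lambda>y. \<bar>u y\<bar>) x0)
    \<le> esup {x-r<..<x+r} u - einf {x-r<..<x+r} u"
proof -
  have w: "\<And>y. 0 \<le> \<bar>u y\<bar>" "\<And>y. \<bar>u y\<bar> \<le> M"
    using u by auto
  have abs: "esup {x-r<..<x+r} (\<lambda>y. \<bar>u y\<bar>) - einf {x-r<..<x+r} (\<lambda>y. \<bar>u y\<bar>)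
    \<le> esup {x-r<..<x+r} u - einf {x-r<..<x+r} u"
    using r by (intro esup_minus_einf_abs_le[OF _ u] lebesgue_positive_Ioo) auto
  consider "x - r < x0" "x0 < x + r" | "x0 \<le> x - r" | "x + r \<le> x0"
    by linarith
  then show ?thesis
  proof cases
    case 1
    then show ?thesis
      using esup_minus_einf_outward_sup_inside[of "\<lambda>y. \<bar>u y\<bar>" M, OF w 1] esup_abs_add_le_of_balanced_point[of u M, OF u x0 1]
      by linarith
  next
    case 2
    then show ?thesis
      using esup_minus_einf_outward_sup_right[of "\<lambda>y. \<bar>u y\<bar>" M, OF w r 2] abs by linarith
  next
    case 3
    then show ?thesis
      using esup_minus_einf_outward_sup_left[of "\<lambda>y. \<bar>u y\<bar>" M, OF w r 3] abs by linarith
  qed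
qed

section \<open>The monotone competitor\<close>

lemma osc_nonneg:
  assumes "u \<in> borel_measurable lebesgue" "lebesgue_positive I" "ess_bounded_on I u"
  shows "0 \<le> osc I u"
  using einf_le_esup[OF assms(2,3)] osc_eq_esup_minus_einf[OF assms] by simp

lemma osc_outward_sup_abs_unit_clip_le:
  assumes v: "v \<in> borel_measurable lebesgue" "ess_bounded_on {x - r<..<x + r} v" and r: "0 < r"
    and x0: "balanced_point (\<lambda>y. unit_clip (v y)) r x0"
  shows "osc {x - r<..<x + r} (outward_sup (\<lambda>y. \<bar>unit_clip (v y)\<bar>) x0) \<le> osc {x - r<..<x + r} v"
proof -
  let ?W = "{x - r<..<x + r}" and ?u = "\<lambda>y. unit_clip (v y)"
  let ?vt = "outward_sup (\<lambda>y. \<bar>?u y\<bar>) x0"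
  have I: "lebesgue_positive ?W"
    using r by (intro lebesgue_positive_Ioo) simp
  have w: "0 \<le> \<bar>?u y\<bar>" "\<bar>?u y\<bar> \<le> 1" for y
    using abs_unit_clip_le by auto
  have vt: "?vt \<in> borel_measurable lebesgue" "ess_bounded_on ?W ?vt"
    using mono_outward_sup[of "\<lambda>y. \<bar>?u y\<bar>" 1, OF w] abs_outward_sup_le[of "\<lambda>y. \<bar>?u y\<bar>" 1, OF w]
    by (auto simp: borel_measurable_mono measurable_completion intro: ess_bounded_onI)
  have "esup ?W ?vt - einf ?W ?vt \<le> esup ?W ?u - einf ?W ?u"
    using abs_unit_clip_le by (intro esup_minus_einf_outward_sup_le[OF _ r x0])
  also have "\<dots> \<le> esup ?W v - einf ?W v"
    by (rule esup_minus_einf_unit_clip_le[OF I v(2)])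
  finally show ?thesis
    using osc_eq_esup_minus_einf[OF vt(1) I vt(2)] osc_eq_esup_minus_einf[OF v(1) I v(2)] by simp
qed

lemma outward_sup_abs_eq_outside:
  assumes u: "\<And>y. \<bar>u y\<bar> \<le> 1" and x0: "x0 \<in> {a..b}"
    and a: "AE y in lebesgue. y < a \<longrightarrow> u y = -1" and b: "AE y in lebesgue. b < y \<longrightarrow> u y = 1"
  shows "AE y in lebesgue. y \<in> {..<a} \<union> {b<..} \<longrightarrow> outward_sup (\<lambda>y. \<bar>u y\<bar>) x0 y = u y"
proof -
  have w: "0 \<le> \<bar>u y\<bar>" "\<bar>u y\<bar> \<le> 1" for y
    using u by auto
  have left: "outward_sup (\<lambda>y. \<bar>u y\<bar>) x0 y = -1" if "y < a" for y
    using a x0 that by (intro outward_sup_eq_lower[of "\<lambda>y. \<bar>u y\<bar>" 1, OF w]) (auto elim!: eventually_mono)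
  have right: "outward_sup (\<lambda>y. \<bar>u y\<bar>) x0 y = 1" if "b < y" for y
    using b x0 that by (intro outward_sup_eq_upper[of "\<lambda>y. \<bar>u y\<bar>" 1, OF w]) (auto elim!: eventually_mono)
  from a b show ?thesis
    by eventually_elim (use left right in auto)
qed

lemma AE_W_outward_sup_abs_le:
  assumes H: "hyp_H W" and u: "\<And>y. \<bar>u y\<bar> \<le> 1"
  shows "AE y in lebesgue. W (outward_sup (\<lambda>y. \<bar>u y\<bar>) x0 y) \<le> W (u y)"
proof -
  have w: "0 \<le> \<bar>u y\<bar>" "\<bar>u y\<bar> \<le> 1" for y
    using u by auto
  show ?thesis
    using AE_le_abs_outward_sup[of "\<lambda>y. \<bar>u y\<bar>" 1, OF w, of x0]
    by eventually_elim (intro W_le_of_abs_le[OF H] abs_outward_sup_le[of "\<lambda>y. \<bar>u y\<bar>" 1, OF w])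
qed

lemma energy_mono:
  assumes "\<And>x. 0 \<le> osc {x - r<..<x + r} f" "\<And>x. osc {x - r<..<x + r} f \<le> osc {x - r<..<x + r} g"
    and "AE x in lebesgue. W (f x) \<le> W (g x)"
  shows "energy r W a b f \<le> energy r W a b g"
  unfolding energy_def
proof (rule add_mono)
  have "(osc {x - r<..<x + r} f)\<^sup>2 \<le> (osc {x - r<..<x + r} g)\<^sup>2" for x
    using assms(1,2) by (intro power_mono)
  then show "(\<integral>\<^sup>+ x \<in> {a<..<b}. ennreal (1 / (2 * r\<^sup>2) * (osc {x - r<..<x + r} f)\<^sup>2) \<partial>lebesgue)
      \<le> (\<integral>\<^sup>+ x \<in> {a<..<b}. ennreal (1 / (2 * r\<^sup>2) * (osc {x - r<..<x + r} g)\<^sup>2) \<partial>lebesgue)"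
    by (intro nn_integral_mono mult_right_mono ennreal_leI mult_left_mono) auto
  show "(\<integral>\<^sup>+ x \<in> {a<..<b}. ennreal (W (f x)) \<partial>lebesgue) \<le> (\<integral>\<^sup>+ x \<in> {a<..<b}. ennreal (W (g x)) \<partial>lebesgue)"
    using assms(3) by (intro nn_integral_mono_AE) (auto elim!: eventually_mono intro!: mult_right_mono ennreal_leI)
qed

theorem lemma2p1:
  fixes r R :: real and W v :: "real \<Rightarrow> real"
  assumes "r > 0" and "hyp_H W" and "R > 2 * r"
    and "v \<in> borel_measurable lebesgue"
    and "\<exists>C. AE x in lebesgue. \<bar>v x\<bar> \<le> C"
    and "AE x in lebesgue. x \<ge> R - r \<longrightarrow> v x = 1"
    and "AE x in lebesgue. x \<le> - R + r \<longrightarrow> v x = -1"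
  shows "\<exists>vt :: real \<Rightarrow> real. mono vt
           \<and> (AE x in lebesgue. x \<in> {..< - R + r} \<union> {R - r<..} \<longrightarrow> vt x = v x)
           \<and> energy r W (-R) R vt \<le> energy r W (-R) R v"
proof -
  let ?u = "\<lambda>y. unit_clip (v y)"
  have uL: "AE y in lebesgue. y < - R + r \<longrightarrow> ?u y = -1"
    using assms(7) by eventually_elim (auto simp: unit_clip_def)
  have uR: "AE y in lebesgue. R - r < y \<longrightarrow> ?u y = 1"
    using assms(6) by eventually_elim (auto simp: unit_clip_def)
  have "AE y in lebesgue. y < - R + r \<longrightarrow> ?u y \<le> -1"
    using uL by (auto elim!: eventually_mono)
  moreover have "AE y in lebesgue. R - r < y \<longrightarrow> 1 \<le> ?u y"
    using uR by (auto elim!: eventually_mono)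
  moreover have "- R + r \<le> R - r"
    using assms(1,3) by linarith
  ultimately obtain x0 where x0: "x0 \<in> {- R + r..R - r}" "balanced_point ?u r x0"
    using exists_balanced_point[of ?u 1 "- R + r" "R - r" r, OF abs_unit_clip_le] by blast
  define vt where "vt = outward_sup (\<lambda>y. \<bar>?u y\<bar>) x0"
  have "mono vt"
    unfolding vt_def by (rule mono_outward_sup[of _ 1]) (auto intro: abs_unit_clip_le)
  moreover have "AE x in lebesgue. x \<in> {..< - R + r} \<union> {R - r<..} \<longrightarrow> vt x = v x"
    using outward_sup_abs_eq_outside[OF abs_unit_clip_le x0(1) uL uR] assms(6,7)
    unfolding vt_def by eventually_elim (auto simp: unit_clip_def)
  moreover have "energy r W (-R) R vt \<le> energy r W (-R) R v"
  proof (rule energy_mono)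
    have v: "ess_bounded_on I v" for I
      using assms(5) by (auto simp: ess_bounded_on_def elim!: eventually_mono)
    show "0 \<le> osc {x - r<..<x + r} vt" for x
      using \<open>mono vt\<close> assms(1) abs_outward_sup_le[of "\<lambda>y. \<bar>?u y\<bar>" 1] abs_unit_clip_le
      unfolding vt_def by (intro osc_nonneg lebesgue_positive_Ioo ess_bounded_onI[of _ 1])
        (auto simp: borel_measurable_mono measurable_completion)
    show "osc {x - r<..<x + r} vt \<le> osc {x - r<..<x + r} v" for x
      unfolding vt_def by (rule osc_outward_sup_abs_unit_clip_le[OF assms(4) v assms(1) x0(2)])
    show "AE x in lebesgue. W (vt x) \<le> W (v x)"
      using AE_W_outward_sup_abs_le[OF assms(2) abs_unit_clip_le, of v x0]
      unfolding vt_def by eventually_elim (use W_unit_clip_le[OF assms(2)] in \<open>blast intro: order_trans\<close>)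
  qed
  ultimately show ?thesis
    by blast
qed

end
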